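(* If $\Phi$ is a depth-bounded fuzzy bisimulation between fuzzy automata $\mathcal{A}$ and $\mathcal{A}'$, then $\|\Phi\|^b_{\mathcal{A},\mathcal{A}'}\le E(\mathbf{L}(\mathcal{A}),\mathbf{L}(\mathcal{A}'))$.
   Context: $\mathcal{L}=\langle L,\le,\otimes,\Rightarrow,0,1\rangle$ is a complete residuated lattice: $\langle L,\le,0,1\rangle$ is a complete lattice with least element $0$ and greatest element $1$, $\langle L,\otimes,1\rangle$ is a commutative monoid, and $x\otimes y\le z$ iff $x\le (y\Rightarrow z)$; $x\Leftrightarrow y=(x\Rightarrow y)\wedge(y\Rightarrow x)$. Fuzzy sets/relations are maps into $L$ ordered pointwise; $\varphi^{-1}(b,a)=\varphi(a,b)$; $(\varphi\circ\psi)(a,c)=\bigvee_b\varphi(a,b)\otimes\psi(b,c)$, $(f\circ\varphi)(b)=\bigvee_a f(a)\otimes\varphi(a,b)$, $(\varphi\circ g)(a)=\bigvee_b\varphi(a,b)\otimes g(b)$; $S(g,f)=\bigwedge_a(g(a)\Rightarrow f(a))$, $E(g,f)=\bigwedge_a(g(a)\Leftrightarrow f(a))$. A fuzzy automaton over $\Sigma$ is $\mathcal{A}=\langle A,\delta^{\mathcal{A}},\sigma^{\mathcal{A}},\tau^{\mathcal{A}}\rangle$ with $A$ nonempty, $\delta^{\mathcal{A}}:A\times\Sigma\times A\to L$, $\sigma^{\mathcal{A}},\tau^{\mathcal{A}}:A\to L$; $\delta^{\mathcal{A}}_s(x,y)=\delta^{\mathcal{A}}(x,s,y)$; similarly $\mathcal{A}'$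 with states $A'$. $\mathbf{L}(\mathcal{A})(s_1\cdots s_k)=\sigma^{\mathcal{A}}\circ\delta^{\mathcal{A}}_{s_1}\circ\cdots\circ\delta^{\mathcal{A}}_{s_k}\circ\tau^{\mathcal{A}}$. $\|\varphi\|_{\mathcal{A},\mathcal{A}'}=S(\sigma^{\mathcal{A}},\sigma^{\mathcal{A}'}\circ\varphi^{-1})$. A depth-bounded fuzzy bisimulation between $\mathcal{A}$ and $\mathcal{A}'$ is a sequence $\Phi=(\varphi_n)_{n\in\mathbb{N}}$ of fuzzy relations $A\times A'\to L$ with $\varphi_n\le\varphi_{n-1}$ ($n\ge1$), $\varphi_0^{-1}\circ\tau^{\mathcal{A}}\le\tau^{\mathcal{A}'}$, $\varphi_0\circ\tau^{\mathcal{A}'}\le\tau^{\mathcal{A}}$, and for all $s\in\Sigma,n\ge1$: $\varphi_n^{-1}\circ\delta^{\mathcal{A}}_s\le\delta^{\mathcal{A}'}_s\circ\varphi_{n-1}^{-1}$ and $\varphi_n\circ\delta^{\mathcal{A}'}_s\le\delta^{\mathcal{A}}_s\circ\varphi_{n-1}$. Its norm is $\|\Phi\|^b_{\mathcal{A},\mathcal{A}'}=\bigwedge_n\|\varphi_n\|_{\mathcal{A},\mathcal{A}'}\wedge\bigwedge_n\|\varphi_n^{-1}\|_{\mathcal{A}',\mathcal{A}}$. *)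

theory Defs
  imports Main
begin

text \<open>Complete residuated lattice: the carrier is a type of class complete_lattice
  (0 = bot, 1 = top); the monoid operation tn and the residuum rs are parameters.\<close>

definition complete_residuated_lattice ::
  "('l::complete_lattice \<Rightarrow> 'l \<Rightarrow> 'l) \<Rightarrow> ('l \<Rightarrow> 'l \<Rightarrow> 'l) \<Rightarrow> bool" where
  "complete_residuated_lattice tn rs \<longleftrightarrow>
     (\<forall>x y z. tn (tn x y) z = tn x (tn y z)) \<and>
     (\<forall>x y. tn x y = tn y x) \<and>
     (\<forall>x. tn x top = x) \<and>
     (\<forall>x y z. tn x y \<le> z \<longleftrightarrow> x \<le> rs y z)"

definition biimp :: "('l::complete_lattice \<Rightarrow> 'l \<Rightarrow> 'l) \<Rightarrow> 'l \<Rightarrow> 'l \<Rightarrow> 'l" where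
  "biimp rs x y = inf (rs x y) (rs y x)"

definition fconv :: "('a \<Rightarrow> 'b \<Rightarrow> 'l) \<Rightarrow> 'b \<Rightarrow> 'a \<Rightarrow> 'l" where
  "fconv \<phi> = (\<lambda>b a. \<phi> a b)"

definition rcomp :: "('l::complete_lattice \<Rightarrow> 'l \<Rightarrow> 'l) \<Rightarrow>
    ('a \<Rightarrow> 'b \<Rightarrow> 'l) \<Rightarrow> ('b \<Rightarrow> 'c \<Rightarrow> 'l) \<Rightarrow> 'a \<Rightarrow> 'c \<Rightarrow> 'l" where
  "rcomp tn \<phi> \<psi> = (\<lambda>a c. SUP b. tn (\<phi> a b) (\<psi> b c))"

definition setrel :: "('l::complete_lattice \<Rightarrow> 'l \<Rightarrow> 'l) \<Rightarrow>
    ('a \<Rightarrow> 'l) \<Rightarrow> ('a \<Rightarrow> 'b \<Rightarrow> 'l) \<Rightarrow> 'b \<Rightarrow> 'l" where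
  "setrel tn f \<phi> = (\<lambda>b. SUP a. tn (f a) (\<phi> a b))"

definition relset :: "('l::complete_lattice \<Rightarrow> 'l \<Rightarrow> 'l) \<Rightarrow>
    ('a \<Rightarrow> 'b \<Rightarrow> 'l) \<Rightarrow> ('b \<Rightarrow> 'l) \<Rightarrow> 'a \<Rightarrow> 'l" where
  "relset tn \<phi> g = (\<lambda>a. SUP b. tn (\<phi> a b) (g b))"

definition fsubs :: "('l::complete_lattice \<Rightarrow> 'l \<Rightarrow> 'l) \<Rightarrow> ('a \<Rightarrow> 'l) \<Rightarrow> ('a \<Rightarrow> 'l) \<Rightarrow> 'l" where
  "fsubs rs g f = (INF a. rs (g a) (f a))"

definition fequ :: "('l::complete_lattice \<Rightarrow> 'l \<Rightarrow> 'l) \<Rightarrow> ('a \<Rightarrow> 'l) \<Rightarrow> ('a \<Rightarrow> 'l) \<Rightarrow> 'l" where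
  "fequ rs g f = (INF a. biimp rs (g a) (f a))"

record ('a, 's, 'l) fauto =
  delta :: "'a \<Rightarrow> 's \<Rightarrow> 'a \<Rightarrow> 'l"
  sigma :: "'a \<Rightarrow> 'l"
  tau :: "'a \<Rightarrow> 'l"

definition dlt :: "('a, 's, 'l) fauto \<Rightarrow> 's \<Rightarrow> 'a \<Rightarrow> 'a \<Rightarrow> 'l" where
  "dlt A s = (\<lambda>x y. delta A x s y)"

fun wtau :: "('l::complete_lattice \<Rightarrow> 'l \<Rightarrow> 'l) \<Rightarrow> ('a, 's, 'l) fauto \<Rightarrow> 's list \<Rightarrow> 'a \<Rightarrow> 'l" where
  "wtau tn A [] = tau A"
| "wtau tn A (s # w) = relset tn (dlt A s) (wtau tn A w)"

definition lang :: "('l::complete_lattice \<Rightarrow> 'l \<Rightarrow> 'l) \<Rightarrow> ('a, 's, 'l) fauto \<Rightarrow> 's list \<Rightarrow> 'l" where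
  "lang tn A w = (SUP a. tn (sigma A a) (wtau tn A w a))"

definition fnorm :: "('l::complete_lattice \<Rightarrow> 'l \<Rightarrow> 'l) \<Rightarrow> ('l \<Rightarrow> 'l \<Rightarrow> 'l) \<Rightarrow>
    ('a, 's, 'l) fauto \<Rightarrow> ('b, 's, 'l) fauto \<Rightarrow> ('a \<Rightarrow> 'b \<Rightarrow> 'l) \<Rightarrow> 'l" where
  "fnorm tn rs A A' \<phi> = fsubs rs (sigma A) (setrel tn (sigma A') (fconv \<phi>))"

definition db_bisim :: "('l::complete_lattice \<Rightarrow> 'l \<Rightarrow> 'l) \<Rightarrow>
    ('a, 's, 'l) fauto \<Rightarrow> ('b, 's, 'l) fauto \<Rightarrow> (nat \<Rightarrow> 'a \<Rightarrow> 'b \<Rightarrow> 'l) \<Rightarrow> bool" where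
  "db_bisim tn A A' \<Phi> \<longleftrightarrow>
     (\<forall>n\<ge>1. \<Phi> n \<le> \<Phi> (n - 1)) \<and>
     relset tn (fconv (\<Phi> 0)) (tau A) \<le> tau A' \<and>
     relset tn (\<Phi> 0) (tau A') \<le> tau A \<and>
     (\<forall>s. \<forall>n\<ge>1. rcomp tn (fconv (\<Phi> n)) (dlt A s) \<le> rcomp tn (dlt A' s) (fconv (\<Phi> (n - 1)))) \<and>
     (\<forall>s. \<forall>n\<ge>1. rcomp tn (\<Phi> n) (dlt A' s) \<le> rcomp tn (dlt A s) (\<Phi> (n - 1)))"

definition db_norm :: "('l::complete_lattice \<Rightarrow> 'l \<Rightarrow> 'l) \<Rightarrow> ('l \<Rightarrow> 'l \<Rightarrow> 'l) \<Rightarrow>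
    ('a, 's, 'l) fauto \<Rightarrow> ('b, 's, 'l) fauto \<Rightarrow> (nat \<Rightarrow> 'a \<Rightarrow> 'b \<Rightarrow> 'l) \<Rightarrow> 'l" where
  "db_norm tn rs A A' \<Phi> =
     inf (INF n. fnorm tn rs A A' (\<Phi> n)) (INF n. fnorm tn rs A' A (fconv (\<Phi> n)))"

end

theory Submission
  imports Defs
begin

text \<open>Since \<open>x \<otimes> -\<close> is a left adjoint it preserves suprema, so sup-composition of fuzzy
  relations is associative and monotone. A level-\<open>n\<close> relation \<open>\<phi>\<^sub>n\<^sup>-\<^sup>1\<close> then carries the right
  part \<open>\<delta>\<^sub>w \<circ> \<tau>\<close> of every word \<open>w\<close> of length at most \<open>n\<close> below the corresponding \<open>\<delta>'\<^sub>w \<circ> \<tau>'\<close>,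
  by induction on \<open>w\<close> using one forth condition per letter and the \<open>\<tau>\<close>-condition at the end.
  Combined with \<open>\<sigma> \<le> \<sigma>' \<circ> \<phi>\<^sub>n\<^sup>-\<^sup>1\<close> to degree \<open>\<parallel>\<phi>\<^sub>n\<parallel>\<close> this gives
  \<open>\<parallel>\<phi>\<^sub>n\<parallel> \<otimes> L(A)(w) \<le> L(A')(w)\<close>; the other implication is the same argument for the inverse
  bisimulation.\<close>

context
  fixes tn rs :: "'l::complete_lattice \<Rightarrow> 'l \<Rightarrow> 'l"
  assumes crl: "complete_residuated_lattice tn rs"
begin

lemma tn_le_iff_le_rs: "tn x y \<le> z \<longleftrightarrow> x \<le> rs y z"
  using crl unfolding complete_residuated_lattice_def by blast

lemma tn_assoc: "tn (tn x y) z = tn x (tn y z)"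
  using crl unfolding complete_residuated_lattice_def by blast

lemma tn_commute: "tn x y = tn y x"
  using crl unfolding complete_residuated_lattice_def by blast

lemma tn_mono_left: "x \<le> x' \<Longrightarrow> tn x z \<le> tn x' z"
  by (meson order.trans order_refl tn_le_iff_le_rs)

lemma tn_mono: "x \<le> x' \<Longrightarrow> y \<le> y' \<Longrightarrow> tn x y \<le> tn x' y'"
  by (metis order.trans tn_mono_left tn_commute)

lemma tn_SUP_right: "tn x (SUP i. f i) = (SUP i. tn x (f i))"
proof (rule order_antisym)
  have "f i \<le> rs x (SUP i. tn x (f i))" for i
    unfolding tn_le_iff_le_rs[symmetric] tn_commute[of _ x] by (rule SUP_upper) simp
  then have "tn (SUP i. f i) x \<le> (SUP i. tn x (f i))"
    unfolding tn_le_iff_le_rs by (rule SUP_least)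
  then show "tn x (SUP i. f i) \<le> (SUP i. tn x (f i))"
    by (simp only: tn_commute[of x])
  show "(SUP i. tn x (f i)) \<le> tn x (SUP i. f i)"
    by (rule SUP_least) (simp add: tn_mono SUP_upper)
qed

lemma tn_SUP_left: "tn (SUP i. f i) y = (SUP i. tn (f i) y)"
  using tn_SUP_right by (simp add: tn_commute)

lemma SUP_tn_reassoc:
  "(SUP c. tn (SUP b. tn (x b) (y b c)) (z c)) = (SUP b. tn (x b) (SUP c. tn (y b c) (z c)))"
proof -
  have "(SUP c. tn (SUP b. tn (x b) (y b c)) (z c)) = (SUP c. SUP b. tn (x b) (tn (y b c) (z c)))"
    by (simp add: tn_SUP_left tn_assoc)
  also have "\<dots> = (SUP b. SUP c. tn (x b) (tn (y b c) (z c)))"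
    by (rule SUP_commute)
  also have "\<dots> = (SUP b. tn (x b) (SUP c. tn (y b c) (z c)))"
    by (simp add: tn_SUP_right)
  finally show ?thesis .
qed

lemma relset_rcomp: "relset tn (rcomp tn \<phi> \<psi>) g = relset tn \<phi> (relset tn \<psi> g)"
  unfolding relset_def rcomp_def by (simp add: SUP_tn_reassoc)

lemma SUP_setrel_tn: "(SUP a. tn (setrel tn f \<phi> a) (g a)) = (SUP b. tn (f b) (relset tn \<phi> g b))"
  unfolding relset_def setrel_def using SUP_tn_reassoc .

lemma relset_mono: "\<phi> \<le> \<phi>' \<Longrightarrow> g \<le> g' \<Longrightarrow> relset tn \<phi> g \<le> relset tn \<phi>' g'"
  unfolding relset_def le_fun_def by (blast intro: SUP_mono' tn_mono)

lemma tn_fsubs_le: "tn (fsubs rs f g) (f a) \<le> g a"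
  unfolding fsubs_def tn_le_iff_le_rs by (rule INF_lower) simp

end

lemma fconv_mono: "\<phi> \<le> \<psi> \<Longrightarrow> fconv \<phi> \<le> fconv \<psi>"
  by (simp add: fconv_def le_fun_def)

lemma fconv_fconv [simp]: "fconv (fconv \<phi>) = \<phi>"
  by (simp add: fconv_def)

lemma db_bisim_antimono:
  assumes "db_bisim tn A A' \<Phi>"
  shows "antimono \<Phi>"
proof -
  have "\<Phi> (Suc n) \<le> \<Phi> n" for n
    using assms unfolding db_bisim_def by (metis diff_Suc_1 le_add1 plus_1_eq_Suc)
  then show ?thesis
    by (simp add: antimono_iff_le_Suc)
qed

lemma db_bisim_fconv:
  assumes "db_bisim tn A A' \<Phi>"
  shows "db_bisim tn A' A (\<lambda>n. fconv (\<Phi> n))"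
proof -
  have "fconv (\<Phi> n) \<le> fconv (\<Phi> (n - 1))" if "n \<ge> 1" for n
    using assms that fconv_mono unfolding db_bisim_def by blast
  then show ?thesis
    using assms unfolding db_bisim_def by simp
qed

lemma db_bisim_relset_wtau_le:
  assumes crl: "complete_residuated_lattice tn rs" and bisim: "db_bisim tn A A' \<Phi>"
  shows "length w \<le> n \<Longrightarrow> relset tn (fconv (\<Phi> n)) (wtau tn A w) \<le> wtau tn A' w"
proof (induction w arbitrary: n)
  case Nil
  have "relset tn (fconv (\<Phi> n)) (tau A) \<le> relset tn (fconv (\<Phi> 0)) (tau A)"
    using antimonoD[OF db_bisim_antimono[OF bisim], of 0 n]
    by (simp add: relset_mono[OF crl] fconv_mono)
  also have "\<dots> \<le> tau A'"
    using bisim unfolding db_bisim_def by blast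
  finally show ?case
    by simp
next
  case (Cons s w)
  then have "n \<ge> 1" and IH: "relset tn (fconv (\<Phi> (n - 1))) (wtau tn A w) \<le> wtau tn A' w"
    by auto
  have forth: "rcomp tn (fconv (\<Phi> n)) (dlt A s) \<le> rcomp tn (dlt A' s) (fconv (\<Phi> (n - 1)))"
    using bisim \<open>n \<ge> 1\<close> unfolding db_bisim_def by blast
  have "relset tn (fconv (\<Phi> n)) (wtau tn A (s # w))
      = relset tn (rcomp tn (fconv (\<Phi> n)) (dlt A s)) (wtau tn A w)"
    by (simp add: relset_rcomp[OF crl])
  also have "\<dots> \<le> relset tn (rcomp tn (dlt A' s) (fconv (\<Phi> (n - 1)))) (wtau tn A w)"
    using forth by (simp add: relset_mono[OF crl])
  also have "\<dots> = relset tn (dlt A' s) (relset tn (fconv (\<Phi> (n - 1))) (wtau tn A w))"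
    by (rule relset_rcomp[OF crl])
  also have "\<dots> \<le> wtau tn A' (s # w)"
    using IH by (simp add: relset_mono[OF crl])
  finally show ?case .
qed

lemma tn_fnorm_lang_le:
  assumes crl: "complete_residuated_lattice tn rs"
  shows "tn (fnorm tn rs A A' \<phi>) (lang tn A w) \<le> (SUP b. tn (sigma A' b) (relset tn (fconv \<phi>) (wtau tn A w) b))"
proof -
  have "tn (fnorm tn rs A A' \<phi>) (lang tn A w)
      = (SUP a. tn (tn (fnorm tn rs A A' \<phi>) (sigma A a)) (wtau tn A w a))"
    unfolding lang_def by (simp add: tn_SUP_right[OF crl] tn_assoc[OF crl])
  also have "\<dots> \<le> (SUP a. tn (setrel tn (sigma A') (fconv \<phi>) a) (wtau tn A w a))"
    unfolding fnorm_def
    by (intro SUP_mono' tn_mono[OF crl] tn_fsubs_le[OF crl] order_refl)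
  also have "\<dots> = (SUP b. tn (sigma A' b) (relset tn (fconv \<phi>) (wtau tn A w) b))"
    by (rule SUP_setrel_tn[OF crl])
  finally show ?thesis .
qed

lemma INF_fnorm_le_rs_lang:
  assumes crl: "complete_residuated_lattice tn rs" and bisim: "db_bisim tn A A' \<Phi>"
  shows "(INF n. fnorm tn rs A A' (\<Phi> n)) \<le> rs (lang tn A w) (lang tn A' w)"
proof -
  let ?n = "length w"
  have "tn (fnorm tn rs A A' (\<Phi> ?n)) (lang tn A w)
      \<le> (SUP b. tn (sigma A' b) (relset tn (fconv (\<Phi> ?n)) (wtau tn A w) b))"
    by (rule tn_fnorm_lang_le[OF crl])
  also have "\<dots> \<le> lang tn A' w"
    using db_bisim_relset_wtau_le[OF crl bisim order_refl]
    unfolding lang_def le_fun_def by (intro SUP_mono' tn_mono[OF crl] order_refl) blast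
  finally have "tn (fnorm tn rs A A' (\<Phi> ?n)) (lang tn A w) \<le> lang tn A' w" .
  then have "fnorm tn rs A A' (\<Phi> ?n) \<le> rs (lang tn A w) (lang tn A' w)"
    by (simp add: tn_le_iff_le_rs[OF crl])
  then show ?thesis
    by (meson INF_lower UNIV_I order_trans)
qed

theorem mainTheorem15:
  fixes tn rs :: "'l::complete_lattice \<Rightarrow> 'l \<Rightarrow> 'l"
    and A :: "('a, 's, 'l) fauto" and A' :: "('b, 's, 'l) fauto"
    and \<Phi> :: "nat \<Rightarrow> 'a \<Rightarrow> 'b \<Rightarrow> 'l"
  assumes "complete_residuated_lattice tn rs"
    and "db_bisim tn A A' \<Phi>"
  shows "db_norm tn rs A A' \<Phi> \<le> fequ rs (lang tn A) (lang tn A')"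
  unfolding db_norm_def fequ_def biimp_def
proof (intro INF_greatest inf_greatest)
  fix w
  show "inf (INF n. fnorm tn rs A A' (\<Phi> n)) (INF n. fnorm tn rs A' A (fconv (\<Phi> n)))
      \<le> rs (lang tn A w) (lang tn A' w)"
    using INF_fnorm_le_rs_lang[OF assms] le_infI1 by blast
  show "inf (INF n. fnorm tn rs A A' (\<Phi> n)) (INF n. fnorm tn rs A' A (fconv (\<Phi> n)))
      \<le> rs (lang tn A' w) (lang tn A w)"
    using INF_fnorm_le_rs_lang[OF assms(1) db_bisim_fconv[OF assms(2)]] le_infI2 by blast
qed

end
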